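(* Define $h_n\in\,]0,\pi/4]$ by $\tan h_n=m_n$, and let $G(x)=\tfrac12\arctan(2\tan x)$ for $|x|<\pi/2$. Then $h_n=G^{\circ n}(\pi/4)$ for all $n\ge0$.
   Context: $(m_n)_{n\ge0}$ is the unique sequence of positive reals with $m_0=1$ and $(1+m_1+\cdots+m_n)m_n=1$ for $n\ge1$ (equivalently $m_{n+1}^2+m_{n+1}/m_n-1=0$). $G^{\circ n}$ denotes the $n$-fold composition, $G^{\circ0}=\mathrm{id}$. *)

theory Defs
  imports Complex_Main
begin

definition G :: "real \<Rightarrow> real" where
  "G x = arctan (2 * tan x) / 2"

end

theory Submission
  imports Defs
begin

(* Since 0 < h n \<le> pi/4 and tan (h n) = m n, we have h n = arctan (m n).  By the
   double-angle formula, G (arctan s) = arctan t whenever |t| < 1 and s = t / (1 - t^2).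
   The recurrence m (n+1)^2 + m (n+1) / m n = 1 says exactly that m n = t / (1 - t^2)
   for t = m (n+1) \<in> ]0,1[, so h (n+1) = G (h n), and h 0 = arctan 1 = pi/4. *)

lemma G_arctan:
  fixes t :: real
  assumes "\<bar>t\<bar> < 1"
  shows "G (arctan (t / (1 - t\<^sup>2))) = arctan t"
proof -
  have "2 * arctan t = arctan (2 * t / (1 - t\<^sup>2))"
    using arctan_double[OF assms] .
  then show ?thesis
    by (simp add: G_def tan_arctan times_divide_eq_right)
qed

lemma sum_atMost_mult_eq_1:
  fixes m :: "nat \<Rightarrow> 'a::field"
  assumes "m 0 = 1"
    and "\<And>n. n \<ge> 1 \<Longrightarrow> (1 + (\<Sum>k=1..n. m k)) * m n = 1"
  shows "(\<Sum>k\<le>n. m k) * m n = 1"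
proof (cases "n = 0")
  case True
  then show ?thesis using assms(1) by simp
next
  case False
  have "(\<Sum>k\<le>n. m k) = m 0 + (\<Sum>k=1..n. m k)"
    by (simp add: atMost_atLeast0 sum.atLeast_Suc_atMost)
  then show ?thesis using assms False by simp
qed

lemma quadratic_recurrence_of_sum_atMost_mult_eq_1:
  fixes m :: "nat \<Rightarrow> 'a::field"
  assumes "\<And>n. (\<Sum>k\<le>n. m k) * m n = 1"
  shows "(m (Suc n))\<^sup>2 + m (Suc n) / m n = 1"
proof -
  have "m n \<noteq> 0"
    using assms[of n] by auto
  then have "(\<Sum>k\<le>n. m k) = 1 / m n"
    using assms[of n] by (simp add: field_simps)
  moreover have "((\<Sum>k\<le>n. m k) + m (Suc n)) * m (Suc n) = 1"
    using assms[of "Suc n"] by simp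
  ultimately show ?thesis
    by (simp add: field_simps power2_eq_square)
qed

lemma quadratic_recurrence_inverse:
  fixes s t :: real
  assumes "s > 0" "t > 0" "t\<^sup>2 + t / s = 1"
  shows "\<bar>t\<bar> < 1" "t / (1 - t\<^sup>2) = s"
proof -
  have diff: "1 - t\<^sup>2 = t / s"
    using assms(3) by simp
  moreover have "t / s > 0"
    using assms(1,2) by simp
  ultimately have "t\<^sup>2 < 1"
    by linarith
  then show "\<bar>t\<bar> < 1"
    by (simp add: abs_square_less_1)
  show "t / (1 - t\<^sup>2) = s"
    unfolding diff using assms(1,2) by simp
qed

theorem proposition4p1:
  fixes m h :: "nat \<Rightarrow> real"
  assumes m0: "m 0 = 1"
    and mpos: "\<And>n. m n > 0"
    and mrec: "\<And>n. n \<ge> 1 \<Longrightarrow> (1 + (\<Sum>k=1..n. m k)) * m n = 1"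
    and hrange: "\<And>n. h n \<in> {0<..pi/4}"
    and htan: "\<And>n. tan (h n) = m n"
  shows "\<forall>n. h n = (G ^^ n) (pi/4)"
proof -
  have h_arctan: "h n = arctan (m n)" for n
    using arctan_tan[of "h n"] hrange[of n] htan[of n] pi_gt_zero by auto
  have h_Suc: "h (Suc n) = G (h n)" for n
  proof -
    have "(m (Suc n))\<^sup>2 + m (Suc n) / m n = 1"
      using quadratic_recurrence_of_sum_atMost_mult_eq_1 sum_atMost_mult_eq_1[OF m0 mrec] .
    then have "\<bar>m (Suc n)\<bar> < 1" "m (Suc n) / (1 - (m (Suc n))\<^sup>2) = m n"
      using quadratic_recurrence_inverse mpos by blast+
    then show ?thesis
      using G_arctan h_arctan by metis
  qed
  have h0: "h 0 = pi/4"
    using h_arctan m0 arctan_one by simp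
  show ?thesis
  proof
    fix n
    show "h n = (G ^^ n) (pi/4)"
      by (induction n) (simp_all add: h0 h_Suc)
  qed
qed

end
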